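(* Let $A\in\mathbb{R}^{N\times N}$ be symmetric positive definite, $b\in\mathbb{R}^N$, $x_0\in\mathbb{R}^N$ with $r_0=b-Ax_0\neq0$, and let $n$ be the grade of $r_0$ with respect to $A$. Run the conjugate gradient method (exact arithmetic): $p_0=r_0$ and, for $k=1,2,\dots$, $$\gamma_{k-1}=\frac{r_{k-1}^Tr_{k-1}}{p_{k-1}^TAp_{k-1}},\quad x_k=x_{k-1}+\gamma_{k-1}p_{k-1},\quad r_k=r_{k-1}-\gamma_{k-1}Ap_{k-1},\quad \delta_k=\frac{r_k^Tr_k}{r_{k-1}^Tr_{k-1}},\quad p_k=r_k+\delta_kp_{k-1}.$$ For $1\le k\le n$ let $L_k^T$ be the $k\times k$ upper bidiagonal matrix with diagonal entries $1/\sqrt{\gamma_{j-1}}$, $j=1,\dots,k$, and superdiagonal entries $\sqrt{\delta_j/\gamma_{j-1}}$, $j=1,\dots,k-1$, let $T_k=L_kL_k^T$, and define $\xi_k=\|r_0\|^2e_1^TT_k^{-2}e_1$ (with $e_1$ the first column of the $k\times k$ identity), and $\xi_0=0$. Let $\psi_i=\gamma_i\|r_i\|^2$, and let $\phi_0=1$, $\phi_k=\phi_{k-1}/(\phi_{k-1}+\delta_k)$ for $k\ge1$. Then $$\xi_k=\sum_{j=0}^{k-1}\|r_j\|^{-2}\Big(\sum_{i=j}^{k-1}\psi_i\Big)^2,$$ and $\xi_{k+1}$, $k=0,1,2,\dots$ (with $k+1\le n$), can be computed by the recurrences $$\vartheta_{k+1}=\vartheta_k+\gamma_k\phi_k^{-1},\qquad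 \xi_{k+1}=\xi_k+\psi_k(\vartheta_{k+1}+\vartheta_k),$$ where $\vartheta_0=0$ and $\xi_0=0$.
   Context: $\|\cdot\|$ is the Euclidean norm. The grade $n$ of $r_0$ with respect to $A$ is the maximal dimension of the Krylov subspaces $\mathrm{span}\{r_0,Ar_0,\dots,A^{k-1}r_0\}$; for $k\le n$ all CG quantities above are well defined and $\gamma_{k-1}>0$. $T_k$ coincides with the Jacobi matrix of Lanczos recurrence coefficients generated by $A$ and $r_0/\|r_0\|$. *)

theory Defs
  imports "HOL-Analysis.Analysis" "Jordan_Normal_Form.Gauss_Jordan_Elimination"
begin

definition krylov :: "real^'n^'n \<Rightarrow> real^'n \<Rightarrow> nat \<Rightarrow> (real^'n) set" where
  "krylov A v k = span {(((*v) A) ^^ j) v | j. j < k}"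

definition grade :: "real^'n^'n \<Rightarrow> real^'n \<Rightarrow> nat" where
  "grade A v = Max (range (\<lambda>k. dim (krylov A v k)))"

fun cg :: "real^'n^'n \<Rightarrow> real^'n \<Rightarrow> real^'n \<Rightarrow> nat \<Rightarrow> (real^'n) \<times> (real^'n) \<times> (real^'n)" where
  "cg A b x0 0 = (x0, b - A *v x0, b - A *v x0)"
| "cg A b x0 (Suc k) =
     (case cg A b x0 k of (x, r, p) \<Rightarrow>
       let \<gamma> = inner r r / inner p (A *v p);
           x' = x + \<gamma> *\<^sub>R p;
           r' = r - \<gamma> *\<^sub>R (A *v p);
           \<delta> = inner r' r' / inner r r;
           p' = r' + \<delta> *\<^sub>R p
       in (x', r', p'))"

definition cg_x where "cg_x A b x0 k = fst (cg A b x0 k)"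
definition cg_r where "cg_r A b x0 k = fst (snd (cg A b x0 k))"
definition cg_p where "cg_p A b x0 k = snd (snd (cg A b x0 k))"

definition cg_gamma :: "real^'n^'n \<Rightarrow> real^'n \<Rightarrow> real^'n \<Rightarrow> nat \<Rightarrow> real" where
  "cg_gamma A b x0 k = inner (cg_r A b x0 k) (cg_r A b x0 k) /
      inner (cg_p A b x0 k) (A *v cg_p A b x0 k)"

(* delta_k = r_k^T r_k / r_{k-1}^T r_{k-1}, meaningful for k >= 1 *)
definition cg_delta :: "real^'n^'n \<Rightarrow> real^'n \<Rightarrow> real^'n \<Rightarrow> nat \<Rightarrow> real" where
  "cg_delta A b x0 k = inner (cg_r A b x0 k) (cg_r A b x0 k) /
      inner (cg_r A b x0 (k - 1)) (cg_r A b x0 (k - 1))"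

definition cg_psi :: "real^'n^'n \<Rightarrow> real^'n \<Rightarrow> real^'n \<Rightarrow> nat \<Rightarrow> real" where
  "cg_psi A b x0 i = cg_gamma A b x0 i * (norm (cg_r A b x0 i))^2"

(* L_k^T : k x k upper bidiagonal (0-based indices);
   diagonal (i,i): 1/sqrt(gamma_i), superdiagonal (i,i+1): sqrt(delta_{i+1}/gamma_i) *)
definition LT_mat :: "real^'n^'n \<Rightarrow> real^'n \<Rightarrow> real^'n \<Rightarrow> nat \<Rightarrow> real mat" where
  "LT_mat A b x0 k = mat k k (\<lambda>(i, j).
      if j = i then 1 / sqrt (cg_gamma A b x0 i)
      else if j = i + 1 then sqrt (cg_delta A b x0 (i + 1) / cg_gamma A b x0 i)
      else 0)"

definition T_mat :: "real^'n^'n \<Rightarrow> real^'n \<Rightarrow> real^'n \<Rightarrow> nat \<Rightarrow> real mat" where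
  "T_mat A b x0 k = transpose_mat (LT_mat A b x0 k) * LT_mat A b x0 k"

definition cg_xi :: "real^'n^'n \<Rightarrow> real^'n \<Rightarrow> real^'n \<Rightarrow> nat \<Rightarrow> real" where
  "cg_xi A b x0 k = (if k = 0 then 0 else
      (let Ti = the (mat_inverse (T_mat A b x0 k))
       in (norm (cg_r A b x0 0))^2 * ((Ti * Ti) $$ (0, 0))))"

fun cg_phi :: "real^'n^'n \<Rightarrow> real^'n \<Rightarrow> real^'n \<Rightarrow> nat \<Rightarrow> real" where
  "cg_phi A b x0 0 = 1"
| "cg_phi A b x0 (Suc k) = cg_phi A b x0 k / (cg_phi A b x0 k + cg_delta A b x0 (Suc k))"

fun cg_theta :: "real^'n^'n \<Rightarrow> real^'n \<Rightarrow> real^'n \<Rightarrow> nat \<Rightarrow> real" where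
  "cg_theta A b x0 0 = 0"
| "cg_theta A b x0 (Suc k) = cg_theta A b x0 k + cg_gamma A b x0 k * inverse (cg_phi A b x0 k)"

end

theory Submission
  imports Defs "Jordan_Normal_Form.Determinant"
begin

text \<open>
  Below the grade of r_0, the CG vectors r_j and p_j are both a nonzero multiple of A^j r_0 plus
  an element of the Krylov space K_j, which does not contain A^j r_0. Hence r_j and p_j are
  nonzero, and positive definiteness makes every gamma_j positive. Then L_k^T is an invertible
  bidiagonal matrix and T_k^{-1} e_1 can be written down: its i-th entry is
  (-1)^i (psi_i + ... + psi_{k-1}) / (||r_0|| ||r_i||), as one checks by solving L_k y = e_1 and
  L_k^T z = y with y_i = (-1)^i sqrt(gamma_i) ||r_i|| / ||r_0||. Since T_k^{-1} is symmetric,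
  e_1^T T_k^{-2} e_1 = ||T_k^{-1} e_1||^2, which is the closed formula for xi_k.
  For the recurrences, 1/phi_k = ||r_k||^2 (||r_0||^{-2} + ... + ||r_k||^{-2}), so
  theta_k = sum_{j<k} ||r_j||^{-2} (psi_j + ... + psi_{k-1}), and the update of xi_k is the
  expansion (a + psi_k)^2 = a^2 + psi_k ((a + psi_k) + a) of every square in the closed formula.
\<close>

section \<open>Krylov subspaces\<close>

abbreviation matpow_apply :: "real^'n^'n \<Rightarrow> nat \<Rightarrow> real^'n \<Rightarrow> real^'n" where
  "matpow_apply A i v \<equiv> (((*v) A) ^^ i) v"

lemma krylov_eq_span_powers: "krylov A v k = span ((\<lambda>i. matpow_apply A i v) ` {..<k})"
  unfolding krylov_def by (rule arg_cong[where f = span]) auto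

lemma subspace_krylov: "subspace (krylov A v k)"
  by (simp add: krylov_def subspace_span)

lemma matpow_apply_in_krylov: "i < k \<Longrightarrow> matpow_apply A i v \<in> krylov A v k"
  unfolding krylov_eq_span_powers by (rule span_base) auto

lemma krylov_mono: "j \<le> k \<Longrightarrow> krylov A v j \<subseteq> krylov A v k"
  unfolding krylov_eq_span_powers by (rule span_mono) auto

lemma matrix_vector_mult_in_krylov:
  assumes "x \<in> krylov A v k"
  shows "A *v x \<in> krylov A v (Suc k)"
proof -
  have "A *v x \<in> (*v) A ` span ((\<lambda>i. matpow_apply A i v) ` {..<k})"
    using assms unfolding krylov_eq_span_powers by blast
  also have "\<dots> = span ((\<lambda>i. matpow_apply A (Suc i) v) ` {..<k})"
    by (simp add: span_linear_image[OF matrix_vector_mul_linear[of A], symmetric] image_image)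
  also have "\<dots> \<subseteq> krylov A v (Suc k)"
    unfolding krylov_eq_span_powers by (rule span_mono) (auto simp del: funpow.simps)
  finally show ?thesis .
qed

lemma dim_krylov_le: "dim (krylov A v k) \<le> k"
proof -
  have "dim (krylov A v k) = dim ((\<lambda>i. matpow_apply A i v) ` {..<k})"
    unfolding krylov_eq_span_powers by (rule dim_span)
  also have "\<dots> \<le> card ((\<lambda>i. matpow_apply A i v) ` {..<k})"
    by (rule dim_le_card') simp
  also have "\<dots> \<le> k"
    using card_image_le[of "{..<k}"] by simp
  finally show ?thesis .
qed

lemma matpow_apply_notin_krylov:
  assumes "j < grade A v"
  shows "matpow_apply A j v \<notin> krylov A v j"
proof
  assume in_j: "matpow_apply A j v \<in> krylov A v j"
  have shift: "krylov A v (Suc j) \<subseteq> krylov A v j"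
    unfolding krylov_eq_span_powers[of A v "Suc j"]
    using in_j matpow_apply_in_krylov[of _ j A v]
    by (intro span_minimal[OF _ subspace_krylov]) (auto simp: less_Suc_eq)
  have powers_in_j: "matpow_apply A m v \<in> krylov A v j" for m
  proof (induction m)
    case 0
    then show ?case
      using in_j matpow_apply_in_krylov[of 0 j A v] by (cases j) auto
  next
    case (Suc m)
    have "A *v matpow_apply A m v \<in> krylov A v (Suc j)"
      by (rule matrix_vector_mult_in_krylov[OF Suc])
    with shift show ?case
      by auto
  qed
  have "dim (krylov A v m) \<le> j" for m
  proof -
    have "krylov A v m \<subseteq> krylov A v j"
      unfolding krylov_eq_span_powers[of A v m]
      using powers_in_j by (intro span_minimal[OF _ subspace_krylov]) auto
    then show ?thesis
      using dim_subset dim_krylov_le order_trans by metis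
  qed
  then have "range (\<lambda>m. dim (krylov A v m)) \<subseteq> {..j}"
    by auto
  then have "grade A v \<le> j"
    unfolding grade_def by (intro Max.boundedI) (auto intro: finite_subset)
  with assms show False
    by simp
qed

lemma krylov_leading_term_nonzero:
  assumes "j < grade A v" and "a \<noteq> 0" and "x - a *\<^sub>R matpow_apply A j v \<in> krylov A v j"
  shows "x \<noteq> 0"
proof
  assume "x = 0"
  then have "matpow_apply A j v = (- inverse a) *\<^sub>R (x - a *\<^sub>R matpow_apply A j v)"
    using assms(2) by simp
  also have "\<dots> \<in> krylov A v j"
    using assms(3) subspace_krylov subspace_scale by blast
  finally show False
    using matpow_apply_notin_krylov[OF assms(1)] by simp
qed

lemma krylov_Suc_if_leading_term:
  assumes "x - a *\<^sub>R matpow_apply A j v \<in> krylov A v j"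
  shows "x \<in> krylov A v (Suc j)"
proof -
  have "x = (x - a *\<^sub>R matpow_apply A j v) + a *\<^sub>R matpow_apply A j v"
    by simp
  also have "\<dots> \<in> krylov A v (Suc j)"
    using assms krylov_mono[of j "Suc j" A v] matpow_apply_in_krylov[of j "Suc j" A v]
    by (intro subspace_add[OF subspace_krylov] subspace_scale[OF subspace_krylov]) auto
  finally show ?thesis .
qed

section \<open>Conjugate gradient iterates below the grade\<close>

lemma cg_r_0: "cg_r A b x0 0 = b - A *v x0"
  by (simp add: cg_r_def)

lemma cg_p_0: "cg_p A b x0 0 = b - A *v x0"
  by (simp add: cg_p_def)

lemma cg_r_Suc:
  "cg_r A b x0 (Suc j) = cg_r A b x0 j - cg_gamma A b x0 j *\<^sub>R (A *v cg_p A b x0 j)"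
  by (simp add: cg_r_def cg_p_def cg_gamma_def Let_def split: prod.split)

lemma cg_p_Suc:
  "cg_p A b x0 (Suc j) = cg_r A b x0 (Suc j) + cg_delta A b x0 (Suc j) *\<^sub>R cg_p A b x0 j"
  by (simp add: cg_r_def cg_p_def cg_gamma_def cg_delta_def Let_def split: prod.split)

lemma cg_delta_Suc:
  "cg_delta A b x0 (Suc j) = (norm (cg_r A b x0 (Suc j)))\<^sup>2 / (norm (cg_r A b x0 j))\<^sup>2"
  by (simp add: cg_delta_def power2_norm_eq_inner)

lemma cg_gamma_pos:
  assumes posdef: "\<And>v. v \<noteq> 0 \<Longrightarrow> inner v (A *v v) > 0"
    and "cg_r A b x0 j \<noteq> 0" and "cg_p A b x0 j \<noteq> 0"
  shows "cg_gamma A b x0 j > 0"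
  unfolding cg_gamma_def using assms by (simp add: divide_pos_pos)

lemma cg_leading_terms:
  assumes posdef: "\<And>v. v \<noteq> 0 \<Longrightarrow> inner v (A *v v) > 0"
  shows "j < grade A (b - A *v x0) \<Longrightarrow> \<exists>a. a \<noteq> 0
     \<and> cg_r A b x0 j - a *\<^sub>R matpow_apply A j (b - A *v x0) \<in> krylov A (b - A *v x0) j
     \<and> cg_p A b x0 j - a *\<^sub>R matpow_apply A j (b - A *v x0) \<in> krylov A (b - A *v x0) j"
proof (induction j)
  case 0
  show ?case
    by (intro exI[of _ 1]) (simp add: cg_r_0 cg_p_0 subspace_krylov subspace_0)
next
  case (Suc j)
  define v where "v = b - A *v x0"
  let ?K = "krylov A v (Suc j)"
  have j: "j < grade A v"
    using Suc.prems v_def by simp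
  obtain a where "a \<noteq> 0"
    and r: "cg_r A b x0 j - a *\<^sub>R matpow_apply A j v \<in> krylov A v j"
    and p: "cg_p A b x0 j - a *\<^sub>R matpow_apply A j v \<in> krylov A v j"
    using Suc.IH j v_def by blast
  have "cg_gamma A b x0 j > 0"
    using cg_gamma_pos[OF posdef] krylov_leading_term_nonzero[OF j \<open>a \<noteq> 0\<close>] r p by blast
  with \<open>a \<noteq> 0\<close> have a': "- cg_gamma A b x0 j * a \<noteq> 0"
    by simp
  have r': "cg_r A b x0 (Suc j) - (- cg_gamma A b x0 j * a) *\<^sub>R matpow_apply A (Suc j) v \<in> ?K"
  proof -
    have "cg_r A b x0 (Suc j) - (- cg_gamma A b x0 j * a) *\<^sub>R matpow_apply A (Suc j) v
        = cg_r A b x0 j - cg_gamma A b x0 j *\<^sub>R (A *v (cg_p A b x0 j - a *\<^sub>R matpow_apply A j v))"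
      by (simp add: cg_r_Suc algebra_simps)
    also have "\<dots> \<in> ?K"
      using krylov_Suc_if_leading_term[OF r] matrix_vector_mult_in_krylov[OF p]
      by (intro subspace_diff[OF subspace_krylov] subspace_scale[OF subspace_krylov])
    finally show ?thesis .
  qed
  have "cg_p A b x0 (Suc j) - (- cg_gamma A b x0 j * a) *\<^sub>R matpow_apply A (Suc j) v
      = (cg_r A b x0 (Suc j) - (- cg_gamma A b x0 j * a) *\<^sub>R matpow_apply A (Suc j) v)
        + cg_delta A b x0 (Suc j) *\<^sub>R cg_p A b x0 j"
    by (simp only: cg_p_Suc) (simp add: algebra_simps)
  also have "\<dots> \<in> ?K"
    using r' krylov_Suc_if_leading_term[OF p]
    by (intro subspace_add[OF subspace_krylov] subspace_scale[OF subspace_krylov])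
  finally show ?case
    using a' r' v_def by blast
qed

lemma cg_positive_below_grade:
  assumes posdef: "\<And>v. v \<noteq> 0 \<Longrightarrow> inner v (A *v v) > 0"
    and j: "j < grade A (b - A *v x0)"
  shows "norm (cg_r A b x0 j) > 0" and "cg_gamma A b x0 j > 0"
proof -
  obtain a where "a \<noteq> 0"
    and "cg_r A b x0 j - a *\<^sub>R matpow_apply A j (b - A *v x0) \<in> krylov A (b - A *v x0) j"
    and "cg_p A b x0 j - a *\<^sub>R matpow_apply A j (b - A *v x0) \<in> krylov A (b - A *v x0) j"
    using cg_leading_terms[OF posdef j] by blast
  then have "cg_r A b x0 j \<noteq> 0" and "cg_p A b x0 j \<noteq> 0"
    using krylov_leading_term_nonzero[OF j] by blast+
  then show "norm (cg_r A b x0 j) > 0" and "cg_gamma A b x0 j > 0"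
    using cg_gamma_pos[OF posdef] by auto
qed

section \<open>Upper bidiagonal matrices\<close>

definition bidiag_mat :: "nat \<Rightarrow> (nat \<Rightarrow> 'a) \<Rightarrow> (nat \<Rightarrow> 'a) \<Rightarrow> 'a :: zero mat" where
  "bidiag_mat k d u = mat k k (\<lambda>(i, j). if j = i then d i else if j = Suc i then u i else 0)"

lemma bidiag_mat_carrier [simp]: "bidiag_mat k d u \<in> carrier_mat k k"
  and dim_row_bidiag_mat [simp]: "dim_row (bidiag_mat k d u) = k"
  and dim_col_bidiag_mat [simp]: "dim_col (bidiag_mat k d u) = k"
  by (simp_all add: bidiag_mat_def)

lemma bidiag_mat_cong:
  assumes "\<And>i. i < k \<Longrightarrow> d i = d' i" and "\<And>i. Suc i < k \<Longrightarrow> u i = u' i"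
  shows "bidiag_mat k d u = bidiag_mat k d' u'"
  using assms by (auto simp: bidiag_mat_def intro!: eq_matI)

lemma det_bidiag_mat: "det (bidiag_mat k d u) = (\<Prod>i<k. d (i :: nat))"
proof -
  have "upper_triangular (bidiag_mat k d u)"
    by (auto simp: upper_triangular_def bidiag_mat_def)
  then have "det (bidiag_mat k d u) = prod_list (diag_mat (bidiag_mat k d u))"
    using det_upper_triangular bidiag_mat_carrier by blast
  also have "\<dots> = (\<Prod>i<k. d i)"
    by (simp add: diag_mat_def bidiag_mat_def prod.list_conv_set_nth atLeast0LessThan)
  finally show ?thesis .
qed

lemma bidiag_mat_mult_vec:
  fixes z :: "'a :: comm_semiring_1 vec"
  assumes "i < k" and "z \<in> carrier_vec k"
  shows "(bidiag_mat k d u *\<^sub>v z) $ i = d i * z $ i + (if Suc i < k then u i * z $ Suc i else 0)"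
proof -
  have "(bidiag_mat k d u *\<^sub>v z) $ i
      = (\<Sum>j<k. (if j = i then d i * z $ i else 0) + (if j = Suc i then u i * z $ Suc i else 0))"
    using assms by (auto simp: bidiag_mat_def scalar_prod_def atLeast0LessThan intro!: sum.cong)
  then show ?thesis
    using assms by (simp add: sum.distrib)
qed

lemma transpose_bidiag_mat_mult_vec:
  fixes y :: "'a :: comm_semiring_1 vec"
  assumes "i < k" and "y \<in> carrier_vec k"
  shows "(transpose_mat (bidiag_mat k d u) *\<^sub>v y) $ i
       = d i * y $ i + (if 0 < i then u (i - 1) * y $ (i - 1) else 0)"
proof -
  have "(transpose_mat (bidiag_mat k d u) *\<^sub>v y) $ i
      = (\<Sum>j<k. (if j = i then d i * y $ i else 0)
               + (if 0 < i \<and> j = i - 1 then u (i - 1) * y $ (i - 1) else 0))"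
    using assms by (auto simp: bidiag_mat_def scalar_prod_def atLeast0LessThan intro!: sum.cong)
  then show ?thesis
    using assms by (auto simp: sum.distrib)
qed

lemma bidiag_gram_mult_tail_sums:
  fixes s \<rho> :: "nat \<Rightarrow> real"
  assumes s: "\<And>i. i < k \<Longrightarrow> s i > 0" and \<rho>: "\<And>i. i < k \<Longrightarrow> \<rho> i > 0" and "0 < k"
  defines "U \<equiv> bidiag_mat k (\<lambda>i. 1 / s i) (\<lambda>i. \<rho> (Suc i) / (\<rho> i * s i))"
    and "S \<equiv> \<lambda>i. \<Sum>l=i..<k. (s l * \<rho> l)\<^sup>2"
  shows "(transpose_mat U * U) *\<^sub>v vec k (\<lambda>i. (-1)^i * S i / (\<rho> 0 * \<rho> i)) = unit_vec k 0"
proof -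
  define z where "z = vec k (\<lambda>i. (-1)^i * S i / (\<rho> 0 * \<rho> i))"
  define y where "y = vec k (\<lambda>i. (-1)^i * s i * \<rho> i / \<rho> 0)"
  have \<rho>0: "\<rho> 0 > 0"
    using \<rho> \<open>0 < k\<close> .
  have S_Suc: "S i = (s i * \<rho> i)\<^sup>2 + S (Suc i)" if "i < k" for i
    using that by (simp add: S_def sum.atLeast_Suc_lessThan)
  have Uz: "U *\<^sub>v z = y"
  proof (rule eq_vecI)
    fix i assume "i < dim_vec y"
    then have i: "i < k" by (simp add: y_def)
    have Uz_i: "(U *\<^sub>v z) $ i
        = 1 / s i * z $ i + (if Suc i < k then \<rho> (Suc i) / (\<rho> i * s i) * z $ Suc i else 0)"
      unfolding U_def using i by (rule bidiag_mat_mult_vec) (simp add: z_def)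
    show "(U *\<^sub>v z) $ i = y $ i"
    proof (cases "Suc i < k")
      case True
      then show ?thesis
        using i s[OF i] \<rho>[OF i] \<rho>0 \<rho>[OF True]
        unfolding Uz_i by (simp add: z_def y_def S_Suc[OF i] field_simps power2_eq_square)
    next
      case False
      then have "S (Suc i) = 0"
        by (simp add: S_def)
      then show ?thesis
        using i s[OF i] \<rho>[OF i] \<rho>0 False
        unfolding Uz_i by (simp add: z_def y_def S_Suc[OF i] field_simps power2_eq_square)
    qed
  qed (simp add: U_def y_def)
  have Uy: "transpose_mat U *\<^sub>v y = unit_vec k 0"
  proof (rule eq_vecI)
    fix i assume "i < dim_vec (unit_vec k 0 :: real vec)"
    then have i: "i < k" by simp
    have Uy_i: "(transpose_mat U *\<^sub>v y) $ i
        = 1 / s i * y $ i + (if 0 < i then \<rho> (Suc (i - 1)) / (\<rho> (i - 1) * s (i - 1)) * y $ (i - 1) else 0)"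
      unfolding U_def using i by (rule transpose_bidiag_mat_mult_vec) (simp add: y_def)
    show "(transpose_mat U *\<^sub>v y) $ i = unit_vec k 0 $ i"
    proof (cases i)
      case 0
      then show ?thesis
        using i s[OF i] \<rho>[OF i] \<rho>0
        unfolding Uy_i by (simp add: y_def)
    next
      case (Suc m)
      then show ?thesis
        using i s[OF i] s[of m] \<rho>[OF i] \<rho>[of m]
        unfolding Uy_i by (simp add: y_def field_simps)
    qed
  qed (simp add: U_def)
  have "(transpose_mat U * U) *\<^sub>v z = transpose_mat U *\<^sub>v (U *\<^sub>v z)"
    by (rule assoc_mult_mat_vec) (auto simp: U_def z_def)
  then show ?thesis
    using Uz Uy z_def by simp
qed

lemma mat_inverse_Some_if_det_nonzero:
  fixes T :: "'a :: field mat"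
  assumes "T \<in> carrier_mat k k" and "det T \<noteq> 0"
  obtains Ti where "mat_inverse T = Some Ti"
  using det_non_zero_imp_unit[OF assms] mat_inverse(1)[OF assms(1)] by fastforce

lemma transpose_mat_inverse_symmetric:
  fixes T :: "'a :: field mat"
  assumes T: "T \<in> carrier_mat k k" and sym: "transpose_mat T = T" and Ti: "mat_inverse T = Some Ti"
  shows "transpose_mat Ti = Ti"
proof -
  from mat_inverse(2)[OF T Ti] have TTi: "T * Ti = 1\<^sub>m k" and Ti_carrier: "Ti \<in> carrier_mat k k"
    by auto
  have "transpose_mat Ti * T = transpose_mat (T * Ti)"
    using transpose_mult[OF T Ti_carrier] sym by simp
  then have left_inverse: "transpose_mat Ti * T = 1\<^sub>m k"
    using TTi by simp
  have "transpose_mat Ti = transpose_mat Ti * (T * Ti)"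
    using TTi Ti_carrier by simp
  also have "\<dots> = (transpose_mat Ti * T) * Ti"
    using T Ti_carrier by (simp add: assoc_mult_mat[of _ k k _ k _ k])
  also have "\<dots> = Ti"
    using left_inverse Ti_carrier by simp
  finally show ?thesis .
qed

lemma mat_inverse_square_entry_0_0:
  fixes T :: "'a :: field mat"
  assumes T: "T \<in> carrier_mat k k" and sym: "transpose_mat T = T" and Ti: "mat_inverse T = Some Ti"
    and z: "z \<in> carrier_vec k" and Tz: "T *\<^sub>v z = unit_vec k 0" and "0 < k"
  shows "(Ti * Ti) $$ (0, 0) = scalar_prod z z"
proof -
  from mat_inverse(2)[OF T Ti] have TiT: "Ti * T = 1\<^sub>m k" and Ti_carrier: "Ti \<in> carrier_mat k k"
    by auto
  have "col Ti 0 = Ti *\<^sub>v unit_vec k 0"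
    using Ti_carrier \<open>0 < k\<close> by (intro eq_vecI) auto
  also have "\<dots> = (Ti * T) *\<^sub>v z"
    using Ti_carrier T z Tz by simp
  also have "\<dots> = z"
    using TiT z by simp
  finally have col: "col Ti 0 = z" .
  have "row Ti 0 = col (transpose_mat Ti) 0"
    using Ti_carrier \<open>0 < k\<close> by simp
  then have "row Ti 0 = z"
    using transpose_mat_inverse_symmetric[OF T sym Ti] col by simp
  then show ?thesis
    using Ti_carrier \<open>0 < k\<close> col by simp
qed

section \<open>The closed formula and the recurrences\<close>

lemma LT_mat_eq_bidiag_mat:
  assumes "\<And>i. i < k \<Longrightarrow> cg_gamma A b x0 i > 0" and "\<And>i. i < k \<Longrightarrow> norm (cg_r A b x0 i) > 0"
  shows "LT_mat A b x0 k = bidiag_mat k (\<lambda>i. 1 / sqrt (cg_gamma A b x0 i))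
           (\<lambda>i. norm (cg_r A b x0 (Suc i)) / (norm (cg_r A b x0 i) * sqrt (cg_gamma A b x0 i)))"
proof -
  have "LT_mat A b x0 k = bidiag_mat k (\<lambda>i. 1 / sqrt (cg_gamma A b x0 i))
          (\<lambda>i. sqrt (cg_delta A b x0 (Suc i) / cg_gamma A b x0 i))"
    unfolding LT_mat_def bidiag_mat_def Suc_eq_plus1 ..
  also have "\<dots> = bidiag_mat k (\<lambda>i. 1 / sqrt (cg_gamma A b x0 i))
          (\<lambda>i. norm (cg_r A b x0 (Suc i)) / (norm (cg_r A b x0 i) * sqrt (cg_gamma A b x0 i)))"
    using assms by (intro bidiag_mat_cong) (simp_all add: cg_delta_Suc real_sqrt_divide real_sqrt_mult)
  finally show ?thesis .
qed

lemma cg_xi_eq_sum_tail_sums: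
  assumes gamma_pos: "\<And>i. i < k \<Longrightarrow> cg_gamma A b x0 i > 0"
    and r_pos: "\<And>i. i < k \<Longrightarrow> norm (cg_r A b x0 i) > 0"
  shows "cg_xi A b x0 k =
    (\<Sum>j<k. inverse ((norm (cg_r A b x0 j))\<^sup>2) * (\<Sum>i=j..<k. cg_psi A b x0 i)\<^sup>2)"
proof (cases "k = 0")
  case True
  then show ?thesis
    by (simp add: cg_xi_def)
next
  case False
  define s where "s i = sqrt (cg_gamma A b x0 i)" for i
  define \<rho> where "\<rho> i = norm (cg_r A b x0 i)" for i
  define U where "U = bidiag_mat k (\<lambda>i. 1 / s i) (\<lambda>i. \<rho> (Suc i) / (\<rho> i * s i))"
  define S where "S = (\<lambda>i. \<Sum>l=i..<k. (s l * \<rho> l)\<^sup>2)"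
  define z where "z = vec k (\<lambda>i. (-1)^i * S i / (\<rho> 0 * \<rho> i))"
  have s_pos: "s i > 0" if "i < k" for i
    using gamma_pos[OF that] by (simp add: s_def)
  have \<rho>_pos: "\<rho> i > 0" if "i < k" for i
    using r_pos[OF that] by (simp add: \<rho>_def)
  have S_psi: "S j = (\<Sum>i=j..<k. cg_psi A b x0 i)" for j
    unfolding S_def
    by (intro sum.cong) (auto simp: s_def \<rho>_def cg_psi_def power_mult_distrib gamma_pos[THEN less_imp_le])
  have \<rho>0: "\<rho> 0 > 0"
    using \<rho>_pos False by simp
  have sign_square: "((-1 :: real) ^ i)\<^sup>2 = 1" for i
    by (induction i) simp_all
  have T: "T_mat A b x0 k = transpose_mat U * U"
    using LT_mat_eq_bidiag_mat[OF gamma_pos r_pos] by (simp add: T_mat_def U_def s_def \<rho>_def)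
  have T_carrier: "transpose_mat U * U \<in> carrier_mat k k"
    by (intro carrier_matI) (simp_all add: U_def)
  have "det U \<noteq> 0"
    using s_pos by (force simp: U_def det_bidiag_mat)
  then have "det (transpose_mat U * U) \<noteq> 0"
    by (simp add: det_mult[of _ k] det_transpose[OF bidiag_mat_carrier] U_def)
  then obtain Ti where Ti: "mat_inverse (transpose_mat U * U) = Some Ti"
    using mat_inverse_Some_if_det_nonzero T_carrier by blast
  have sym: "transpose_mat (transpose_mat U * U) = transpose_mat U * U"
    by (simp add: transpose_mult[of _ k k _ k] U_def)
  have "(Ti * Ti) $$ (0, 0) = scalar_prod z z"
    using False s_pos \<rho>_pos bidiag_gram_mult_tail_sums[of k s \<rho>]
    by (intro mat_inverse_square_entry_0_0[OF T_carrier sym Ti]) (auto simp: U_def S_def z_def)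
  then have "cg_xi A b x0 k = (\<rho> 0)\<^sup>2 * (\<Sum>i<k. ((-1)^i * S i / (\<rho> 0 * \<rho> i))\<^sup>2)"
    using False Ti
    by (simp add: cg_xi_def T \<rho>_def z_def scalar_prod_def power2_eq_square atLeast0LessThan)
  also have "\<dots> = (\<Sum>j<k. inverse ((\<rho> j)\<^sup>2) * (S j)\<^sup>2)"
    using \<rho>_pos \<rho>0 sign_square
    by (auto simp: sum_distrib_left power_mult_distrib field_simps intro!: sum.cong)
  also have "\<dots> = (\<Sum>j<k. inverse ((\<rho> j)\<^sup>2) * (\<Sum>i=j..<k. cg_psi A b x0 i)\<^sup>2)"
    by (simp add: S_psi)
  finally show ?thesis
    by (simp add: \<rho>_def)
qed

lemma sum_weighted_tail_sums_Suc:
  fixes w f :: "nat \<Rightarrow> 'a :: comm_semiring_1"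
  shows "(\<Sum>i<Suc m. w i * (\<Sum>l=i..<Suc m. f l))
       = (\<Sum>i<m. w i * (\<Sum>l=i..<m. f l)) + f m * (\<Sum>i\<le>m. w i)"
proof -
  have "(\<Sum>i<Suc m. w i * (\<Sum>l=i..<Suc m. f l))
      = (\<Sum>i<m. w i * (\<Sum>l=i..<m. f l) + w i * f m) + w m * f m"
    by (auto intro!: sum.cong simp: algebra_simps)
  also have "\<dots> = (\<Sum>i<m. w i * (\<Sum>l=i..<m. f l)) + f m * (\<Sum>i\<le>m. w i)"
    by (simp add: sum.distrib sum_distrib_left lessThan_Suc_atMost[symmetric] algebra_simps)
  finally show ?thesis .
qed

lemma sum_weighted_tail_sums_square_Suc:
  fixes w f :: "nat \<Rightarrow> 'a :: comm_semiring_1"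
  shows "(\<Sum>j<Suc k. w j * (\<Sum>i=j..<Suc k. f i)\<^sup>2)
       = (\<Sum>j<k. w j * (\<Sum>i=j..<k. f i)\<^sup>2)
         + f k * ((\<Sum>j<Suc k. w j * (\<Sum>i=j..<Suc k. f i)) + (\<Sum>j<k. w j * (\<Sum>i=j..<k. f i)))"
proof -
  have square: "(\<Sum>j<Suc k. w j * (\<Sum>i=j..<Suc k. f i)\<^sup>2)
      = (\<Sum>j<k. w j * ((\<Sum>i=j..<k. f i) + f k)\<^sup>2) + w k * (f k)\<^sup>2"
    by (auto intro!: sum.cong)
  have linear: "(\<Sum>j<Suc k. w j * (\<Sum>i=j..<Suc k. f i))
      = (\<Sum>j<k. w j * ((\<Sum>i=j..<k. f i) + f k)) + w k * f k"
    by (auto intro!: sum.cong)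
  show ?thesis
    unfolding square linear
    by (simp add: power2_eq_square sum.distrib sum_distrib_left sum_distrib_right algebra_simps)
qed

lemma inverse_cg_phi:
  assumes "\<And>i. i \<le> j \<Longrightarrow> norm (cg_r A b x0 i) > 0"
  shows "inverse (cg_phi A b x0 j)
       = (norm (cg_r A b x0 j))\<^sup>2 * (\<Sum>i\<le>j. inverse ((norm (cg_r A b x0 i))\<^sup>2))"
  using assms
proof (induction j)
  case 0
  then show ?case
    by simp
next
  case (Suc j)
  define W where "W = (\<Sum>i\<le>j. inverse ((norm (cg_r A b x0 i))\<^sup>2))"
  have "W > 0"
    unfolding W_def using Suc.prems by (intro sum_pos) auto
  have "inverse (cg_phi A b x0 j) = (norm (cg_r A b x0 j))\<^sup>2 * W"
    using Suc by (simp add: W_def)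
  then have phi: "cg_phi A b x0 j = inverse ((norm (cg_r A b x0 j))\<^sup>2 * W)"
    by (metis inverse_inverse_eq)
  have "inverse (cg_phi A b x0 (Suc j))
      = (norm (cg_r A b x0 (Suc j)))\<^sup>2 * (W + inverse ((norm (cg_r A b x0 (Suc j)))\<^sup>2))"
    unfolding cg_phi.simps phi cg_delta_Suc
    using \<open>W > 0\<close> Suc.prems[of j] Suc.prems[of "Suc j"] by (simp add: field_simps)
  then show ?case
    by (simp add: W_def)
qed

lemma cg_theta_eq_sum_tail_sums:
  assumes "\<And>i. i < m \<Longrightarrow> norm (cg_r A b x0 i) > 0"
  shows "cg_theta A b x0 m
       = (\<Sum>i<m. inverse ((norm (cg_r A b x0 i))\<^sup>2) * (\<Sum>l=i..<m. cg_psi A b x0 l))"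
  using assms
proof (induction m)
  case 0
  then show ?case
    by simp
next
  case (Suc m)
  have "inverse (cg_phi A b x0 m)
      = (norm (cg_r A b x0 m))\<^sup>2 * (\<Sum>i\<le>m. inverse ((norm (cg_r A b x0 i))\<^sup>2))"
    using Suc.prems by (intro inverse_cg_phi) auto
  then have "cg_theta A b x0 (Suc m)
      = cg_theta A b x0 m + cg_psi A b x0 m * (\<Sum>i\<le>m. inverse ((norm (cg_r A b x0 i))\<^sup>2))"
    by (simp add: cg_psi_def mult.assoc)
  then show ?case
    using Suc unfolding sum_weighted_tail_sums_Suc by simp
qed

theorem lemma1:
  fixes A :: "real^'N^'N" and b x0 :: "real^'N"
  assumes symm: "transpose A = A"
    and posdef: "\<And>v. v \<noteq> 0 \<Longrightarrow> inner v (A *v v) > 0"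
    and r0: "b - A *v x0 \<noteq> 0"
  defines "n \<equiv> grade A (b - A *v x0)"
  shows "(\<forall>k. 1 \<le> k \<and> k \<le> n \<longrightarrow>
            cg_xi A b x0 k =
              (\<Sum>j<k. inverse ((norm (cg_r A b x0 j))^2) *
                        (\<Sum>i=j..<k. cg_psi A b x0 i)^2))
       \<and> (\<forall>k. k + 1 \<le> n \<longrightarrow>
            cg_xi A b x0 (k + 1) =
              cg_xi A b x0 k + cg_psi A b x0 k * (cg_theta A b x0 (k + 1) + cg_theta A b x0 k))"
proof -
  have r_pos: "norm (cg_r A b x0 i) > 0" and gamma_pos: "cg_gamma A b x0 i > 0" if "i < n" for i
    using cg_positive_below_grade[OF posdef] that unfolding n_def by auto
  have xi: "cg_xi A b x0 k =
      (\<Sum>j<k. inverse ((norm (cg_r A b x0 j))\<^sup>2) * (\<Sum>i=j..<k. cg_psi A b x0 i)\<^sup>2)"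
    if "k \<le> n" for k
    using that r_pos gamma_pos by (intro cg_xi_eq_sum_tail_sums) auto
  have theta: "cg_theta A b x0 k =
      (\<Sum>j<k. inverse ((norm (cg_r A b x0 j))\<^sup>2) * (\<Sum>i=j..<k. cg_psi A b x0 i))"
    if "k \<le> n" for k
    using that r_pos by (intro cg_theta_eq_sum_tail_sums) auto
  show ?thesis
  proof (intro conjI allI impI)
    fix k
    assume "1 \<le> k \<and> k \<le> n"
    then show "cg_xi A b x0 k =
        (\<Sum>j<k. inverse ((norm (cg_r A b x0 j))^2) * (\<Sum>i=j..<k. cg_psi A b x0 i)^2)"
      using xi by blast
  next
    fix k
    assume "k + 1 \<le> n"
    then have "k \<le> n" and "Suc k \<le> n"
      by simp_all
    have "cg_xi A b x0 (Suc k) =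
        cg_xi A b x0 k + cg_psi A b x0 k * (cg_theta A b x0 (Suc k) + cg_theta A b x0 k)"
      unfolding xi[OF \<open>k \<le> n\<close>] xi[OF \<open>Suc k \<le> n\<close>] theta[OF \<open>k \<le> n\<close>] theta[OF \<open>Suc k \<le> n\<close>]
      by (rule sum_weighted_tail_sums_square_Suc)
    then show "cg_xi A b x0 (k + 1) =
        cg_xi A b x0 k + cg_psi A b x0 k * (cg_theta A b x0 (k + 1) + cg_theta A b x0 k)"
      by simp
  qed
qed

end
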